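(* Let $(X,d)$ be an $R$-rough geodesic metric space for some $R\ge0$, and let $G$ be a group acting coboundedly on $X$ by isometries. Fix $x_0\in X$. For $t>0$ let $S_{x_0,t}=\{g\in G: d(x_0,gx_0)\le t\}$, let $d_{x_0,t}$ be the word metric on $G$ with respect to $S_{x_0,t}$ multiplied by $t$ (equivalently the graph metric on the graph with vertex set $G$ and an edge of length $t$ between $g$ and $gs$ for each $s\in S_{x_0,t}$), where $d_{x_0,t}(g,h)=\infty$ if $g,h$ lie in different components, and let $f_{x_0,t}\colon(G,d_{x_0,t})\to X$, $g\mapsto gx_0$. Let $K_{x_0,t}$ be the infimum of all $K\ge1$ for which there exists $C_K>0$ such that $f_{x_0,t}$ is a $(K,C_K)$-quasi-isometry (with $K_{x_0,t}=\infty$ if there is no such $K$). Then $K_{x_0,t}\to1$ as $t\to\infty$.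
   Context: $X$ is $R$-rough geodesic if any $x_1,x_2$ are joined by $f\colon[0,\ell]\to X$, $\ell=d(x_1,x_2)$, $f(0)=x_1,f(\ell)=x_2$, with $|d(f(s),f(t))-|s-t||\le R$. The action is cobounded if some (equivalently every) orbit is $D$-dense in $X$ for some $D$. A map $f$ is a $(K,C)$-quasi-isometry if $\frac1Kd(a,b)-C\le d(f(a),f(b))\le Kd(a,b)+C$ for all $a,b$ and every point of the target lies within $C$ of the image. *)

theory Defs
  imports "HOL-Analysis.Analysis" "HOL-Algebra.Group"
begin

definition rough_geodesic :: "real \<Rightarrow> 'a::metric_space itself \<Rightarrow> bool" where
  "rough_geodesic R (_::'a itself) \<longleftrightarrow>
     (\<forall>x1 x2::'a. \<exists>f::real \<Rightarrow> 'a. f 0 = x1 \<and> f (dist x1 x2) = x2 \<and>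
        (\<forall>s\<in>{0..dist x1 x2}. \<forall>t\<in>{0..dist x1 x2}. \<bar>dist (f s) (f t) - \<bar>s - t\<bar>\<bar> \<le> R))"

definition isometric_action :: "('g, 'c) monoid_scheme \<Rightarrow> ('g \<Rightarrow> 'a::metric_space \<Rightarrow> 'a) \<Rightarrow> bool" where
  "isometric_action G act \<longleftrightarrow>
     (\<forall>x. act \<one>\<^bsub>G\<^esub> x = x) \<and>
     (\<forall>g\<in>carrier G. \<forall>h\<in>carrier G. \<forall>x. act (g \<otimes>\<^bsub>G\<^esub> h) x = act g (act h x)) \<and>
     (\<forall>g\<in>carrier G. \<forall>x y. dist (act g x) (act g y) = dist x y)"

definition cobounded_action :: "('g, 'c) monoid_scheme \<Rightarrow> ('g \<Rightarrow> 'a::metric_space \<Rightarrow> 'a) \<Rightarrow> bool" where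
  "cobounded_action G act \<longleftrightarrow> (\<exists>y D. \<forall>x. \<exists>g\<in>carrier G. dist x (act g y) \<le> D)"

definition S_set :: "('g, 'c) monoid_scheme \<Rightarrow> ('g \<Rightarrow> 'a::metric_space \<Rightarrow> 'a) \<Rightarrow> 'a \<Rightarrow> real \<Rightarrow> 'g set" where
  "S_set G act x0 t = {g\<in>carrier G. dist x0 (act g x0) \<le> t}"

text \<open>Word length of g^{-1}h with respect to S (infinite if not representable).\<close>
definition word_len :: "('g, 'c) monoid_scheme \<Rightarrow> 'g set \<Rightarrow> 'g \<Rightarrow> 'g \<Rightarrow> enat" where
  "word_len G S g h = Inf {enat (length ws) | ws. set ws \<subseteq> S \<and>
      h = g \<otimes>\<^bsub>G\<^esub> foldr (\<lambda>s acc. s \<otimes>\<^bsub>G\<^esub> acc) ws \<one>\<^bsub>G\<^esub>}"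

definition word_dist :: "('g, 'c) monoid_scheme \<Rightarrow> ('g \<Rightarrow> 'a::metric_space \<Rightarrow> 'a) \<Rightarrow> 'a \<Rightarrow> real \<Rightarrow> 'g \<Rightarrow> 'g \<Rightarrow> ereal" where
  "word_dist G act x0 t g h = ereal t * ereal_of_enat (word_len G (S_set G act x0 t) g h)"

definition quasi_isometry_on :: "'g set \<Rightarrow> ('g \<Rightarrow> 'g \<Rightarrow> ereal) \<Rightarrow> ('g \<Rightarrow> 'b::metric_space) \<Rightarrow> real \<Rightarrow> real \<Rightarrow> bool" where
  "quasi_isometry_on A dA f K C \<longleftrightarrow>
     (\<forall>a\<in>A. \<forall>b\<in>A. ereal (1/K) * dA a b - ereal C \<le> ereal (dist (f a) (f b)) \<and>
                   ereal (dist (f a) (f b)) \<le> ereal K * dA a b + ereal C) \<and>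
     (\<forall>y. \<exists>a\<in>A. dist y (f a) \<le> C)"

definition K_const :: "('g, 'c) monoid_scheme \<Rightarrow> ('g \<Rightarrow> 'a::metric_space \<Rightarrow> 'a) \<Rightarrow> 'a \<Rightarrow> real \<Rightarrow> ereal" where
  "K_const G act x0 t = Inf {ereal K | K. K \<ge> 1 \<and> (\<exists>C>0.
      quasi_isometry_on (carrier G) (word_dist G act x0 t) (\<lambda>g. act g x0) K C)}"

end

theory Submission
  imports Defs "HOL-Real_Asymp.Real_Asymp"
begin

text \<open>
  Let every point of \<open>X\<close> lie within \<open>D\<close> of the orbit of \<open>x\<^sub>0\<close>, and put \<open>\<sigma> = t - R - 2D\<close>.
  The orbit map is \<open>1\<close>-Lipschitz from \<open>d\<^sub>x\<^sub>0\<^sub>,\<^sub>t\<close>, since every generator moves \<open>x\<^sub>0\<close> by at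
  most \<open>t\<close>. Conversely, cut a rough geodesic from \<open>gx\<^sub>0\<close> to \<open>hx\<^sub>0\<close> into about \<open>d(gx\<^sub>0,hx\<^sub>0)/\<sigma>\<close>
  pieces of length \<open>\<sigma>\<close> and replace each cut point by a nearby orbit point \<open>g\<^sub>ix\<^sub>0\<close>: consecutive
  orbit points are at most \<open>\<sigma> + R + 2D = t\<close> apart, so \<open>g\<^sub>i\<^sup>-\<^sup>1g\<^sub>i\<^sub>+\<^sub>1 \<in> S\<^sub>x\<^sub>0\<^sub>,\<^sub>t\<close>.
  Hence \<open>d\<^sub>x\<^sub>0\<^sub>,\<^sub>t(g,h) \<le> (t/\<sigma>) d(gx\<^sub>0,hx\<^sub>0) + t\<close>, so \<open>1 \<le> K\<^sub>x\<^sub>0\<^sub>,\<^sub>t \<le> t/(t - R - 2D) \<longrightarrow> 1\<close>.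
\<close>

abbreviation word_prod :: "('g, 'c) monoid_scheme \<Rightarrow> 'g list \<Rightarrow> 'g" where
  "word_prod G ws \<equiv> foldr (\<lambda>s acc. s \<otimes>\<^bsub>G\<^esub> acc) ws \<one>\<^bsub>G\<^esub>"

lemma word_len_attained:
  assumes "set ws \<subseteq> S" and "h = g \<otimes>\<^bsub>G\<^esub> word_prod G ws"
  obtains ws' where "word_len G S g h = enat (length ws')" and "length ws' \<le> length ws"
    and "set ws' \<subseteq> S" and "h = g \<otimes>\<^bsub>G\<^esub> word_prod G ws'"
proof -
  define W where "W = {enat (length ws) | ws. set ws \<subseteq> S \<and> h = g \<otimes>\<^bsub>G\<^esub> word_prod G ws}"
  have ws: "enat (length ws) \<in> W"
    unfolding W_def using assms by blast
  then have "Inf W \<in> W"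
    unfolding Inf_enat_def by (auto intro: LeastI)
  moreover have "Inf W \<le> enat (length ws)"
    using ws by (rule Inf_lower)
  moreover have "word_len G S g h = Inf W"
    unfolding word_len_def W_def ..
  ultimately show ?thesis
    using that unfolding W_def by fastforce
qed

lemma (in group) word_prod_closed: "set ws \<subseteq> carrier G \<Longrightarrow> word_prod G ws \<in> carrier G"
  by (induction ws) auto

lemma (in group) word_prod_telescope:
  assumes "\<And>i. gs i \<in> carrier G"
  shows "gs m \<otimes> word_prod G (map (\<lambda>i. inv (gs i) \<otimes> gs (Suc i)) [m..<m+n]) = gs (m+n)"
proof (induction n arbitrary: m)
  case 0
  show ?case using assms by simp
next
  case (Suc n)
  define w where "w = word_prod G (map (\<lambda>i. inv (gs i) \<otimes> gs (Suc i)) [Suc m..<Suc m+n])"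
  have w: "w \<in> carrier G"
    unfolding w_def using assms by (intro word_prod_closed) auto
  have "[m..<m + Suc n] = m # [Suc m..<Suc m + n]"
    by (simp add: upt_rec)
  then have "gs m \<otimes> word_prod G (map (\<lambda>i. inv (gs i) \<otimes> gs (Suc i)) [m..<m + Suc n])
      = gs m \<otimes> ((inv (gs m) \<otimes> gs (Suc m)) \<otimes> w)"
    unfolding w_def by simp
  also have "\<dots> = gs (Suc m) \<otimes> w"
    using assms w by (simp add: m_assoc[symmetric])
  also have "\<dots> = gs (Suc m + n)"
    unfolding w_def by (rule Suc.IH)
  finally show ?case by simp
qed

lemma rough_geodesic_chain:
  fixes a b :: "'a::metric_space"
  assumes "rough_geodesic R TYPE('a)" and "\<sigma> > 0"
  obtains p :: "nat \<Rightarrow> 'a" and N where "p 0 = a" and "p N = b" and "0 < N"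
    and "\<And>i. dist (p i) (p (Suc i)) \<le> \<sigma> + R" and "real N \<le> dist a b / \<sigma> + 1"
proof -
  define L where "L = dist a b"
  obtain f where f0: "f 0 = a" and fL: "f L = b"
    and rough: "\<And>s u. s \<in> {0..L} \<Longrightarrow> u \<in> {0..L} \<Longrightarrow> \<bar>dist (f s) (f u) - \<bar>s - u\<bar>\<bar> \<le> R"
    using assms(1) unfolding rough_geodesic_def L_def by blast
  define N where "N = max 1 (nat \<lceil>L / \<sigma>\<rceil>)"
  define \<tau> where "\<tau> i = min (real i * \<sigma>) L" for i
  have \<tau>_range: "\<tau> i \<in> {0..L}" for i
    unfolding \<tau>_def L_def using assms(2) by auto
  have "L / \<sigma> \<le> real N"
    unfolding N_def by linarith
  then have "\<tau> N = L"
    unfolding \<tau>_def using assms(2) by (simp add: field_simps)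
  moreover have "dist (f (\<tau> i)) (f (\<tau> (Suc i))) \<le> \<sigma> + R" for i
  proof -
    have "\<bar>\<tau> i - \<tau> (Suc i)\<bar> \<le> \<sigma>"
      unfolding \<tau>_def using assms(2) by (auto simp: min_def algebra_simps)
    then show ?thesis
      using rough[OF \<tau>_range \<tau>_range, of i "Suc i"] by linarith
  qed
  moreover have "real N \<le> L / \<sigma> + 1"
    unfolding N_def L_def using assms(2) by (auto simp: max_def)
  ultimately show ?thesis
    using that[of "\<lambda>i. f (\<tau> i)" N] f0 fL unfolding N_def L_def \<tau>_def by auto
qed

lemma covering_radius_nonneg:
  assumes "\<And>x. \<exists>k\<in>A. dist x (f k) \<le> D"
  shows "0 \<le> D"
proof -
  obtain k where "dist undefined (f k) \<le> D"
    using assms by blast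
  then show ?thesis
    using zero_le_dist[of undefined "f k"] by linarith
qed

lemma K_const_ge_one: "1 \<le> K_const G act x0 t"
  unfolding K_const_def by (auto intro: Inf_greatest)

locale isometric_group_action = group G for G :: "('g, 'c) monoid_scheme" (structure) +
  fixes act :: "'g \<Rightarrow> 'a::metric_space \<Rightarrow> 'a"
  assumes isometric: "isometric_action G act"
begin

lemma act_mult: "g \<in> carrier G \<Longrightarrow> h \<in> carrier G \<Longrightarrow> act (g \<otimes> h) x = act g (act h x)"
  using isometric unfolding isometric_action_def by blast

lemma dist_act: "g \<in> carrier G \<Longrightarrow> dist (act g x) (act g y) = dist x y"
  using isometric unfolding isometric_action_def by blast

lemma orbit_dense_if_cobounded:
  assumes "cobounded_action G act"
  obtains D where "\<And>x. \<exists>k\<in>carrier G. dist x (act k x0) \<le> D"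
proof -
  obtain y D where dense: "\<And>x. \<exists>g\<in>carrier G. dist x (act g y) \<le> D"
    using assms unfolding cobounded_action_def by blast
  have "\<exists>g\<in>carrier G. dist x (act g x0) \<le> D + dist y x0" for x
  proof -
    obtain g where g: "g \<in> carrier G" "dist x (act g y) \<le> D"
      using dense by blast
    then have "dist x (act g x0) \<le> D + dist (act g y) (act g x0)"
      using dist_triangle[of x "act g x0" "act g y"] by linarith
    with g show ?thesis
      by (auto simp: dist_act)
  qed
  then show ?thesis
    using that by blast
qed

lemma dist_orbit_word_prod_le:
  assumes "g \<in> carrier G" and "set ws \<subseteq> S_set G act x0 t"
  shows "dist (act g x0) (act (g \<otimes> word_prod G ws) x0) \<le> t * length ws"
  using assms
proof (induction ws arbitrary: g)
  case Nil
  then show ?case by simp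
next
  case (Cons s ws)
  have s: "s \<in> carrier G" "dist x0 (act s x0) \<le> t" and ws: "set ws \<subseteq> S_set G act x0 t"
    using Cons.prems(2) by (auto simp: S_set_def)
  have "word_prod G ws \<in> carrier G"
    using ws by (intro word_prod_closed) (auto simp: S_set_def)
  then have "g \<otimes> word_prod G (s # ws) = (g \<otimes> s) \<otimes> word_prod G ws"
    using s Cons.prems(1) by (simp add: m_assoc)
  then have "dist (act g x0) (act (g \<otimes> word_prod G (s # ws)) x0)
      \<le> dist (act g x0) (act (g \<otimes> s) x0) + dist (act (g \<otimes> s) x0) (act ((g \<otimes> s) \<otimes> word_prod G ws) x0)"
    by (simp add: dist_triangle)
  also have "\<dots> \<le> t + t * length ws"
  proof (rule add_mono)
    show "dist (act g x0) (act (g \<otimes> s) x0) \<le> t"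
      using s Cons.prems(1) by (simp add: act_mult dist_act)
    show "dist (act (g \<otimes> s) x0) (act ((g \<otimes> s) \<otimes> word_prod G ws) x0) \<le> t * length ws"
      using Cons.IH[OF _ ws] s Cons.prems(1) by simp
  qed
  finally show ?case
    by (simp add: algebra_simps)
qed

(* \<open>0 < N\<close> matters: \<open>act g x0 = act h x0\<close> does not force \<open>g = h\<close>. *)
lemma word_shadowing_chain:
  fixes p :: "nat \<Rightarrow> 'a" and N :: nat
  assumes dense: "\<And>x. \<exists>k\<in>carrier G. dist x (act k x0) \<le> D"
    and g: "g \<in> carrier G" and h: "h \<in> carrier G" and "0 < N"
    and p0: "p 0 = act g x0" and pN: "p N = act h x0"
    and step: "\<And>i. i < N \<Longrightarrow> dist (p i) (p (Suc i)) \<le> \<delta>"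
  obtains ws where "set ws \<subseteq> S_set G act x0 (\<delta> + 2 * D)" and "h = g \<otimes> word_prod G ws"
    and "length ws = N"
proof -
  have "0 \<le> D"
    using dense by (rule covering_radius_nonneg)
  define near where "near i = (SOME k. k \<in> carrier G \<and> dist (p i) (act k x0) \<le> D)" for i
  have near: "near i \<in> carrier G \<and> dist (p i) (act (near i) x0) \<le> D" for i
    unfolding near_def by (rule someI_ex) (use dense in blast)
  define gs where "gs i = (if i = 0 then g else if i = N then h else near i)" for i
  have gs_carrier: "gs i \<in> carrier G" for i
    unfolding gs_def using g h near by auto
  have gs_near: "dist (p i) (act (gs i) x0) \<le> D" for i
    using near[of i] \<open>0 \<le> D\<close> p0 pN unfolding gs_def by simp
  define ws where "ws = map (\<lambda>i. inv (gs i) \<otimes> gs (Suc i)) [0..<N]"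
  have "set ws \<subseteq> S_set G act x0 (\<delta> + 2 * D)"
  proof
    fix s assume s_ws: "s \<in> set ws"
    obtain i where i: "i < N" and s: "s = inv (gs i) \<otimes> gs (Suc i)"
      using s_ws unfolding ws_def by auto
    have s_carrier: "s \<in> carrier G"
      using s gs_carrier by simp
    have "dist x0 (act s x0) = dist (act (gs i) x0) (act (gs i \<otimes> s) x0)"
      using gs_carrier s_carrier by (simp add: act_mult dist_act)
    also have "\<dots> = dist (act (gs i) x0) (act (gs (Suc i)) x0)"
      using gs_carrier by (simp add: s m_assoc[symmetric])
    also have "\<dots> \<le> dist (p i) (act (gs i) x0) + dist (p i) (p (Suc i))
        + dist (p (Suc i)) (act (gs (Suc i)) x0)"
      using dist_triangle[of "act (gs i) x0" "act (gs (Suc i)) x0" "p i"]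
        dist_triangle[of "p i" "act (gs (Suc i)) x0" "p (Suc i)"]
        dist_commute[of "act (gs i) x0" "p i"] by linarith
    also have "\<dots> \<le> \<delta> + 2 * D"
      using gs_near[of i] gs_near[of "Suc i"] step[OF i] by linarith
    finally show "s \<in> S_set G act x0 (\<delta> + 2 * D)"
      using s_carrier unfolding S_set_def by simp
  qed
  moreover have "h = g \<otimes> word_prod G ws"
    using word_prod_telescope[of gs 0 N, OF gs_carrier] \<open>0 < N\<close> unfolding ws_def gs_def by simp
  moreover have "length ws = N"
    unfolding ws_def by simp
  ultimately show ?thesis
    using that by blast
qed

lemma word_len_bounds:
  assumes "rough_geodesic R TYPE('a)" and dense: "\<And>x. \<exists>k\<in>carrier G. dist x (act k x0) \<le> D"
    and "R + 2 * D < t" and g: "g \<in> carrier G" and h: "h \<in> carrier G"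
  obtains m where "word_len G (S_set G act x0 t) g h = enat m"
    and "(t - R - 2 * D) * m \<le> dist (act g x0) (act h x0) + (t - R - 2 * D)"
    and "dist (act g x0) (act h x0) \<le> t * m"
proof -
  define \<sigma> where "\<sigma> = t - R - 2 * D"
  define L where "L = dist (act g x0) (act h x0)"
  have "0 < \<sigma>"
    using assms(3) unfolding \<sigma>_def by simp
  obtain p N where "p 0 = act g x0" "p N = act h x0" "0 < N"
    and "\<And>i. dist (p i) (p (Suc i)) \<le> \<sigma> + R" and N: "real N \<le> L / \<sigma> + 1"
    using rough_geodesic_chain[OF assms(1) \<open>0 < \<sigma>\<close>] unfolding L_def by metis
  then obtain ws where "set ws \<subseteq> S_set G act x0 t" "h = g \<otimes> word_prod G ws" "length ws = N"
    using word_shadowing_chain[OF dense g h, of N p "\<sigma> + R"] unfolding \<sigma>_def by auto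
  then obtain ws' where ws': "word_len G (S_set G act x0 t) g h = enat (length ws')"
    "length ws' \<le> N" "set ws' \<subseteq> S_set G act x0 t" "h = g \<otimes> word_prod G ws'"
    by (metis word_len_attained)
  have "\<sigma> * length ws' \<le> \<sigma> * (L / \<sigma> + 1)"
    using ws'(2) N \<open>0 < \<sigma>\<close> by (intro mult_left_mono) auto
  also have "\<dots> = L + \<sigma>"
    using \<open>0 < \<sigma>\<close> by (simp add: field_simps)
  finally have "\<sigma> * length ws' \<le> L + \<sigma>" .
  moreover have "L \<le> t * length ws'"
    using dist_orbit_word_prod_le[OF g ws'(3)] ws'(4) unfolding L_def by simp
  ultimately show ?thesis
    using that ws'(1) unfolding \<sigma>_def L_def by blast
qed

lemma K_const_le:
  assumes "0 \<le> R" and "rough_geodesic R TYPE('a)"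
    and dense: "\<And>x. \<exists>k\<in>carrier G. dist x (act k x0) \<le> D" and "R + 2 * D < t"
  shows "K_const G act x0 t \<le> ereal (t / (t - R - 2 * D))"
proof -
  define \<sigma> where "\<sigma> = t - R - 2 * D"
  define K where "K = t / \<sigma>"
  define C where "C = t + D"
  have "0 \<le> D"
    using dense by (rule covering_radius_nonneg)
  then have "0 < \<sigma>" "\<sigma> \<le> t" "0 < C"
    using assms(1,4) unfolding \<sigma>_def C_def by auto
  then have "1 \<le> K"
    unfolding K_def by simp
  have "quasi_isometry_on (carrier G) (word_dist G act x0 t) (\<lambda>g. act g x0) K C"
    unfolding quasi_isometry_on_def
  proof (intro conjI ballI allI)
    fix a b assume a: "a \<in> carrier G" and b: "b \<in> carrier G"
    define L where "L = dist (act a x0) (act b x0)"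
    obtain m where m: "word_len G (S_set G act x0 t) a b = enat m"
      "\<sigma> * m \<le> L + \<sigma>" "L \<le> t * m"
      using word_len_bounds[OF assms(2) dense assms(4) a b] unfolding \<sigma>_def L_def .
    have wd: "word_dist G act x0 t a b = ereal (t * m)"
      unfolding word_dist_def m(1) by simp
    have "1 / K * (t * m) = \<sigma> * m"
      unfolding K_def using \<open>0 < \<sigma>\<close> \<open>\<sigma> \<le> t\<close> by (simp add: field_simps)
    then have "1 / K * (t * m) - C \<le> L"
      using m(2) \<open>\<sigma> \<le> t\<close> \<open>0 \<le> D\<close> unfolding C_def by linarith
    then show "ereal (1 / K) * word_dist G act x0 t a b - ereal C \<le> ereal L"
      unfolding wd by simp
    have "t * m \<le> K * (t * m)"
      using \<open>1 \<le> K\<close> \<open>\<sigma> \<le> t\<close> \<open>0 < \<sigma>\<close> by (simp add: mult_right_mono[of 1 K "t * m", simplified])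
    then show "ereal L \<le> ereal K * word_dist G act x0 t a b + ereal C"
      unfolding wd using m(3) \<open>0 < C\<close> by simp
  next
    fix y
    obtain k where "k \<in> carrier G" "dist y (act k x0) \<le> D"
      using dense by blast
    then show "\<exists>a\<in>carrier G. dist y (act a x0) \<le> C"
      unfolding C_def using \<open>\<sigma> \<le> t\<close> \<open>0 < \<sigma>\<close> by force
  qed
  then have "K_const G act x0 t \<le> ereal K"
    unfolding K_const_def using \<open>1 \<le> K\<close> \<open>0 < C\<close> by (intro Inf_lower) blast
  then show ?thesis
    unfolding K_def \<sigma>_def .
qed

end

theorem lemma5p2:
  fixes G :: "('g, 'c) monoid_scheme" and act :: "'g \<Rightarrow> 'a::metric_space \<Rightarrow> 'a"
    and R :: real and x0 :: 'a
  assumes "R \<ge> 0" and "rough_geodesic R TYPE('a)"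
    and "group G" and "isometric_action G act" and "cobounded_action G act"
  shows "((\<lambda>t. K_const G act x0 t) \<longlongrightarrow> 1) at_top"
proof -
  interpret isometric_group_action G act
    using assms(3,4) by (simp add: isometric_group_action_def isometric_group_action_axioms_def)
  obtain D where dense: "\<And>x. \<exists>k\<in>carrier G. dist x (act k x0) \<le> D"
    using orbit_dense_if_cobounded[OF assms(5)] by blast
  define c where "c = R + 2 * D"
  have upper: "\<forall>\<^sub>F t in at_top. K_const G act x0 t \<le> ereal (t / (t - c))"
    using eventually_gt_at_top[of c]
    by eventually_elim (use K_const_le[OF assms(1,2) dense] in \<open>simp add: c_def diff_diff_eq\<close>)
  have "((\<lambda>t. t / (t - c)) \<longlongrightarrow> 1) at_top"
    by real_asymp
  then have "((\<lambda>t. ereal (t / (t - c))) \<longlongrightarrow> 1) at_top"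
    using tendsto_ereal by (fastforce simp: one_ereal_def)
  with upper show ?thesis
    by (intro tendsto_sandwich[OF always_eventually[OF allI[OF K_const_ge_one]]] tendsto_const)
qed

end
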